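(* Let $(X,(\cdot,\cdot|\cdot))$ be a 2-inner product space over $\mathbb{K}\in\{\mathbb{R},\mathbb{C}\}$, let $n$ be a positive integer, and let $x,y_1,\dots,y_n,z\in X$. Then \[ \sum_{i=1}^{n}\left|(x,y_i|z)\right|^2\le \|x|z\|^2\left\{\max_{1\le i\le n}\|y_i|z\|^2+\Big(\sum_{1\le i\ne j\le n}\left|(y_i,y_j|z)\right|^2\Big)^{1/2}\right\}. \]
   Context: A 2-inner product on a linear space $X$ of dimension greater than $1$ over $\mathbb{K}$ ($\mathbb{K}=\mathbb{R}$ or $\mathbb{C}$) is a function $(\cdot,\cdot|\cdot):X\times X\times X\to\mathbb{K}$ such that for all $x,x',y,z\in X$ and $\alpha\in\mathbb{K}$: (i) $(x,x|z)\ge 0$, and $(x,x|z)=0$ iff $x$ and $z$ are linearly dependent; (ii) $(x,x|z)=(z,z|x)$; (iii) $(y,x|z)=\overline{(x,y|z)}$; (iv) $(\alpha x,y|z)=\alpha(x,y|z)$; (v) $(x+x',y|z)=(x,y|z)+(x',y|z)$. The associated 2-norm is $\|x|z\|=\sqrt{(x,x|z)}$. The sum $\sum_{1\le i\ne j\le n}$ runs over all ordered pairs $(i,j)$ with $i,j\in\{1,\dots,n\}$, $i\ne j$. *)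

theory Defs
  imports "HOL-Analysis.Analysis"
begin

definition lin_dep2 :: "('k::field \<Rightarrow> 'a::ab_group_add \<Rightarrow> 'a) \<Rightarrow> 'a \<Rightarrow> 'a \<Rightarrow> bool" where
  "lin_dep2 smul x z \<longleftrightarrow> (\<exists>a b. (a \<noteq> 0 \<or> b \<noteq> 0) \<and> smul a x + smul b z = 0)"

text \<open>Generic 2-inner product axioms: cj is the conjugation of the scalar field,
  nonneg the predicate "is a nonnegative real number".  Includes: X is a vector space
  over the scalars of dimension greater than 1.\<close>
definition two_ip_axioms ::
  "('k::field \<Rightarrow> 'a::ab_group_add \<Rightarrow> 'a) \<Rightarrow> ('k \<Rightarrow> 'k) \<Rightarrow> ('k \<Rightarrow> bool)
     \<Rightarrow> ('a \<Rightarrow> 'a \<Rightarrow> 'a \<Rightarrow> 'k) \<Rightarrow> bool" where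
  "two_ip_axioms smul cj nonneg ip \<longleftrightarrow>
     vector_space smul \<and>
     (\<exists>u v. \<not> lin_dep2 smul u v) \<and>
     (\<forall>x z. nonneg (ip x x z)) \<and>
     (\<forall>x z. ip x x z = 0 \<longleftrightarrow> lin_dep2 smul x z) \<and>
     (\<forall>x z. ip x x z = ip z z x) \<and>
     (\<forall>x y z. ip y x z = cj (ip x y z)) \<and>
     (\<forall>a x y z. ip (smul a x) y z = a * ip x y z) \<and>
     (\<forall>x x' y z. ip (x + x') y z = ip x y z + ip x' y z)"

definition real_2ip :: "(real \<Rightarrow> 'a::ab_group_add \<Rightarrow> 'a) \<Rightarrow> ('a \<Rightarrow> 'a \<Rightarrow> 'a \<Rightarrow> real) \<Rightarrow> bool" where
  "real_2ip smul ip \<longleftrightarrow> two_ip_axioms smul (\<lambda>r. r) (\<lambda>r. r \<ge> 0) ip"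

definition complex_2ip :: "(complex \<Rightarrow> 'a::ab_group_add \<Rightarrow> 'a) \<Rightarrow> ('a \<Rightarrow> 'a \<Rightarrow> 'a \<Rightarrow> complex) \<Rightarrow> bool" where
  "complex_2ip smul ip \<longleftrightarrow> two_ip_axioms smul cnj (\<lambda>c. c \<in> \<real> \<and> Re c \<ge> 0) ip"

definition r2norm :: "('a \<Rightarrow> 'a \<Rightarrow> 'a \<Rightarrow> real) \<Rightarrow> 'a \<Rightarrow> 'a \<Rightarrow> real" where
  "r2norm ip x z = sqrt (ip x x z)"

definition c2norm :: "('a \<Rightarrow> 'a \<Rightarrow> 'a \<Rightarrow> complex) \<Rightarrow> 'a \<Rightarrow> 'a \<Rightarrow> real" where
  "c2norm ip x z = sqrt (Re (ip x x z))"

end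

(*
  For fixed z, (u, v) |-> (u, v|z) is a positive semidefinite Hermitian form.  With c_i = (x, y_i|z) put
  w = sum_i c_i y_i, so that (x, w|z) = S := sum_i |c_i|^2.  Cauchy-Schwarz for the form
  gives S^2 <= ||x|z||^2 (w, w|z), and (w, w|z) = sum_{i,j} c_i conj(c_j) (y_i, y_j|z)
  splits into the diagonal part, at most S max_i ||y_i|z||^2, and the off-diagonal part,
  at most S (sum_{i<>j} |(y_i, y_j|z)|^2)^(1/2) by Cauchy-Schwarz for sums over the
  pairs i <> j.  Dividing by S gives the inequality.
*)

theory Submission
  imports Defs
begin

lemma quadratic_nonneg_imp_discriminant_le:
  fixes a b c :: real
  assumes nonneg: "\<And>t. 0 \<le> a - 2 * t * b + t\<^sup>2 * c" and "0 \<le> c"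
  shows "b\<^sup>2 \<le> a * c"
proof (cases "c = 0")
  case True
  have "b = 0"
  proof (rule ccontr)
    assume "b \<noteq> 0"
    then show False
      using nonneg[of "(a + 1) / (2 * b)"] True by (simp add: field_simps)
  qed
  then show ?thesis using True by simp
next
  case False
  with \<open>0 \<le> c\<close> have "0 < c" by simp
  have "0 \<le> a - 2 * (b / c) * b + (b / c)\<^sup>2 * c" by (rule nonneg)
  also have "\<dots> = (a * c - b\<^sup>2) / c"
    using \<open>0 < c\<close> by (simp add: field_simps power2_eq_square)
  finally show ?thesis using \<open>0 < c\<close> by (simp add: zero_le_divide_iff)
qed

lemma le_mult_of_square_le:
  fixes s n w k :: real
  assumes "s\<^sup>2 \<le> n * w" "w \<le> s * k" "0 \<le> s" "0 \<le> n" "0 \<le> k"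
  shows "s \<le> n * k"
proof (cases "s = 0")
  case False
  have "s * s \<le> s * (n * k)"
    using assms mult_left_mono[OF \<open>w \<le> s * k\<close> \<open>0 \<le> n\<close>]
    by (simp add: power2_eq_square algebra_simps)
  then show ?thesis using False \<open>0 \<le> s\<close> by simp
qed (use assms in simp)

definition off_diag :: "'i set \<Rightarrow> ('i \<times> 'i) set" where
  "off_diag I = {(i, j). i \<in> I \<and> j \<in> I \<and> i \<noteq> j}"

lemma off_diag_eq_Sigma: "off_diag I = Sigma I (\<lambda>i. I - {i})"
  by (auto simp: off_diag_def)

lemma double_sum_split_diag:
  assumes "finite I"
  shows "(\<Sum>i\<in>I. \<Sum>j\<in>I. f i j) = (\<Sum>i\<in>I. f i i) + (\<Sum>(i, j)\<in>off_diag I. f i j)"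
proof -
  have "(\<Sum>i\<in>I. \<Sum>j\<in>I. f i j) = (\<Sum>i\<in>I. f i i + (\<Sum>j\<in>I - {i}. f i j))"
    using assms by (intro sum.cong refl) (simp add: sum.remove)
  also have "\<dots> = (\<Sum>i\<in>I. f i i) + (\<Sum>(i, j)\<in>off_diag I. f i j)"
    using assms by (simp add: off_diag_eq_Sigma sum.distrib sum.Sigma)
  finally show ?thesis .
qed

lemma off_diag_sum_le_Cauchy_Schwarz:
  fixes c :: "'i \<Rightarrow> real" and g :: "'i \<Rightarrow> 'i \<Rightarrow> real"
  assumes "finite I"
  shows "(\<Sum>(i, j)\<in>off_diag I. c i * c j * g i j)
           \<le> (\<Sum>i\<in>I. (c i)\<^sup>2) * sqrt (\<Sum>(i, j)\<in>off_diag I. (g i j)\<^sup>2)"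
proof -
  let ?P = "off_diag I"
  have "(\<Sum>(i, j)\<in>?P. c i * c j * g i j) \<le>
      sqrt ((\<Sum>(i, j)\<in>?P. (c i * c j)\<^sup>2) * (\<Sum>(i, j)\<in>?P. (g i j)\<^sup>2))"
    using Cauchy_Schwarz_ineq_sum[of "\<lambda>(i, j). c i * c j" "\<lambda>(i, j). g i j" ?P]
    by (intro real_le_rsqrt) (simp add: case_prod_unfold)
  also have "\<dots> \<le> sqrt ((\<Sum>i\<in>I. (c i)\<^sup>2)\<^sup>2 * (\<Sum>(i, j)\<in>?P. (g i j)\<^sup>2))"
  proof -
    have "(\<Sum>(i, j)\<in>?P. (c i * c j)\<^sup>2) \<le> (\<Sum>(i, j)\<in>I \<times> I. (c i * c j)\<^sup>2)"
      using assms by (intro sum_mono2) (auto simp: off_diag_def)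
    also have "\<dots> = (\<Sum>i\<in>I. (c i)\<^sup>2)\<^sup>2"
      by (simp add: power2_eq_square[of "sum _ _"] sum_product sum.cartesian_product
          power_mult_distrib)
    finally show ?thesis
      by (intro real_sqrt_le_mono mult_right_mono) (auto intro: sum_nonneg)
  qed
  also have "\<dots> = (\<Sum>i\<in>I. (c i)\<^sup>2) * sqrt (\<Sum>(i, j)\<in>?P. (g i j)\<^sup>2)"
    by (simp add: real_sqrt_mult sum_nonneg)
  finally show ?thesis .
qed

lemma quadratic_form_le_diag_offdiag:
  fixes c :: "'i \<Rightarrow> real" and g :: "'i \<Rightarrow> 'i \<Rightarrow> real"
  assumes "finite I" and diag: "\<And>i. i \<in> I \<Longrightarrow> g i i \<le> M"
  shows "(\<Sum>i\<in>I. \<Sum>j\<in>I. c i * c j * g i j)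
           \<le> (\<Sum>i\<in>I. (c i)\<^sup>2) * (M + sqrt (\<Sum>(i, j)\<in>off_diag I. (g i j)\<^sup>2))"
proof -
  have "(\<Sum>i\<in>I. c i * c i * g i i) \<le> (\<Sum>i\<in>I. (c i)\<^sup>2) * M"
    unfolding sum_distrib_right using diag
    by (intro sum_mono) (simp add: power2_eq_square mult_left_mono)
  then show ?thesis
    using double_sum_split_diag[OF \<open>finite I\<close>, of "\<lambda>i j. c i * c j * g i j"]
      off_diag_sum_le_Cauchy_Schwarz[OF \<open>finite I\<close>, of c g]
    by (simp add: distrib_left)
qed

lemma hermitian_form_le_diag_offdiag:
  fixes c :: "'i \<Rightarrow> complex" and g :: "'i \<Rightarrow> 'i \<Rightarrow> complex"
  assumes "finite I" and diag: "\<And>i. i \<in> I \<Longrightarrow> Re (g i i) \<le> M"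
  shows "Re (\<Sum>i\<in>I. \<Sum>j\<in>I. c i * cnj (c j) * g i j)
           \<le> (\<Sum>i\<in>I. (cmod (c i))\<^sup>2) * (M + sqrt (\<Sum>(i, j)\<in>off_diag I. (cmod (g i j))\<^sup>2))"
proof -
  \<comment> \<open>A real matrix with the same diagonal as Re g that dominates g entrywise off it.\<close>
  define h where "h i j = (if i = j then Re (g i i) else cmod (g i j))" for i j
  have diag_eq: "Re (c i * cnj (c i) * g i i) = cmod (c i) * cmod (c i) * h i i" for i
    by (simp add: h_def complex_norm_square[symmetric] power2_eq_square del: of_real_power)
  have "Re (\<Sum>(i, j)\<in>off_diag I. c i * cnj (c j) * g i j)
      \<le> (\<Sum>(i, j)\<in>off_diag I. cmod (c i * cnj (c j) * g i j))"
    using complex_Re_le_cmod norm_sum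
    by (metis (no_types, lifting) case_prod_unfold order_trans sum.cong)
  also have "\<dots> = (\<Sum>(i, j)\<in>off_diag I. cmod (c i) * cmod (c j) * h i j)"
    by (intro sum.cong refl) (auto simp: off_diag_def h_def norm_mult)
  finally have "Re (\<Sum>i\<in>I. \<Sum>j\<in>I. c i * cnj (c j) * g i j)
      \<le> (\<Sum>i\<in>I. \<Sum>j\<in>I. cmod (c i) * cmod (c j) * h i j)"
    unfolding double_sum_split_diag[OF \<open>finite I\<close>] plus_complex.sel Re_sum[of _ I] diag_eq
    by (rule add_left_mono)
  also have "\<dots> \<le> (\<Sum>i\<in>I. (cmod (c i))\<^sup>2) * (M + sqrt (\<Sum>(i, j)\<in>off_diag I. (h i j)\<^sup>2))"
    by (rule quadratic_form_le_diag_offdiag[OF \<open>finite I\<close>]) (simp add: h_def diag)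
  also have "(\<Sum>(i, j)\<in>off_diag I. (h i j)\<^sup>2) = (\<Sum>(i, j)\<in>off_diag I. (cmod (g i j))\<^sup>2)"
    by (intro sum.cong refl) (auto simp: off_diag_def h_def)
  finally show ?thesis .
qed

locale real_semi_inner =
  fixes smul :: "real \<Rightarrow> 'a::ab_group_add \<Rightarrow> 'a" and B :: "'a \<Rightarrow> 'a \<Rightarrow> real"
  assumes add_left: "B (x + x') y = B x y + B x' y"
    and scale_left: "B (smul a x) y = a * B x y"
    and symmetric: "B y x = B x y"
    and nonneg: "0 \<le> B x x"
begin

lemma add_right: "B x (y + y') = B x y + B x y'"
  by (metis add_left symmetric)

lemma scale_right: "B x (smul a y) = a * B x y"
  by (metis scale_left symmetric)

lemma zero_left: "B 0 y = 0"
  using add_left[of 0 0 y] by simp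

lemma sum_left: "B (\<Sum>i\<in>A. f i) y = (\<Sum>i\<in>A. B (f i) y)"
  using sum_comp_morphism[of "\<lambda>x. B x y", OF zero_left add_left, of f A] by (simp add: comp_def)

lemma sum_right: "B x (\<Sum>i\<in>A. f i) = (\<Sum>i\<in>A. B x (f i))"
  using sum_left by (simp add: symmetric)

lemma Cauchy_Schwarz: "(B x w)\<^sup>2 \<le> B x x * B w w"
proof (rule quadratic_nonneg_imp_discriminant_le)
  fix t
  have "B (x + smul (- t) w) (x + smul (- t) w) = B x x - 2 * t * B x w + t\<^sup>2 * B w w"
    by (simp add: add_left add_right scale_left scale_right symmetric[of w x]
        algebra_simps power2_eq_square)
  then show "0 \<le> B x x - 2 * t * B x w + t\<^sup>2 * B w w"
    using nonneg[of "x + smul (- t) w"] by simp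
qed (rule nonneg)

lemma bilinear_sum_sum:
  "B (\<Sum>i\<in>I. smul (c i) (u i)) (\<Sum>j\<in>J. smul (d j) (v j))
     = (\<Sum>i\<in>I. \<Sum>j\<in>J. c i * d j * B (u i) (v j))"
  by (simp add: sum_left sum_right scale_left scale_right sum_distrib_left ac_simps sum.swap[of _ J])

theorem Bombieri:
  assumes "finite I" "I \<noteq> {}"
  shows "(\<Sum>i\<in>I. (B x (y i))\<^sup>2)
           \<le> B x x * (Max ((\<lambda>i. B (y i) (y i)) ` I)
                        + sqrt (\<Sum>(i, j)\<in>off_diag I. (B (y i) (y j))\<^sup>2))"
    (is "?S \<le> B x x * (?M + sqrt ?T)")
proof -
  define w where "w = (\<Sum>i\<in>I. smul (B x (y i)) (y i))"
  have Bxw: "B x w = ?S"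
    by (simp add: w_def sum_right scale_right power2_eq_square)
  have "B w w = (\<Sum>i\<in>I. \<Sum>j\<in>I. B x (y i) * B x (y j) * B (y i) (y j))"
    unfolding w_def by (rule bilinear_sum_sum)
  also have "\<dots> \<le> ?S * (?M + sqrt ?T)"
    using \<open>finite I\<close> by (intro quadratic_form_le_diag_offdiag) auto
  finally have Bww: "B w w \<le> ?S * (?M + sqrt ?T)" .
  have "0 \<le> ?M"
    using assms by (auto simp: Max_ge_iff nonneg)
  then have "0 \<le> ?M + sqrt ?T"
    by (simp add: sum_nonneg case_prod_unfold)
  moreover have "0 \<le> ?S"
    by (simp add: sum_nonneg)
  ultimately show ?thesis
    using le_mult_of_square_le[OF Cauchy_Schwarz[of x w, unfolded Bxw] Bww] nonneg[of x] by simp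
qed

end

locale complex_semi_inner =
  fixes smul :: "complex \<Rightarrow> 'a::ab_group_add \<Rightarrow> 'a" and B :: "'a \<Rightarrow> 'a \<Rightarrow> complex"
  assumes add_left: "B (x + x') y = B x y + B x' y"
    and scale_left: "B (smul a x) y = a * B x y"
    and hermitian: "B y x = cnj (B x y)"
    and nonneg: "0 \<le> Re (B x x)"
begin

lemma add_right: "B x (y + y') = B x y + B x y'"
  by (simp add: hermitian[of x] add_left)

lemma scale_right: "B x (smul a y) = cnj a * B x y"
  by (simp add: hermitian[of x] scale_left)

lemma zero_left: "B 0 y = 0"
  using add_left[of 0 0 y] by simp

lemma sum_left: "B (\<Sum>i\<in>A. f i) y = (\<Sum>i\<in>A. B (f i) y)"
  using sum_comp_morphism[of "\<lambda>x. B x y", OF zero_left add_left, of f A] by (simp add: comp_def)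

lemma sum_right: "B x (\<Sum>i\<in>A. f i) = (\<Sum>i\<in>A. B x (f i))"
  by (simp add: hermitian[of x] sum_left cnj_sum)

lemma sesquilinear_sum_sum:
  "B (\<Sum>i\<in>I. smul (c i) (u i)) (\<Sum>j\<in>J. smul (d j) (v j))
     = (\<Sum>i\<in>I. \<Sum>j\<in>J. c i * cnj (d j) * B (u i) (v j))"
  by (simp add: sum_left sum_right scale_left scale_right sum_distrib_left ac_simps sum.swap[of _ J])

lemma Cauchy_Schwarz: "(cmod (B x w))\<^sup>2 \<le> Re (B x x) * Re (B w w)"
proof -
  define s where "s = (cmod (B x w))\<^sup>2"
  have "s\<^sup>2 \<le> Re (B x x) * (s * Re (B w w))"
  proof (rule quadratic_nonneg_imp_discriminant_le)
    fix t
    \<comment> \<open>Scaling w by the phase of B x w makes the cross terms real.\<close>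
    let ?a = "of_real t * B x w"
    have norm_sq: "B x w * cnj (B x w) = of_real s"
      unfolding s_def by (rule complex_norm_square[symmetric])
    have "B (x + smul (- ?a) w) (x + smul (- ?a) w)
        = B x x - (cnj ?a * B x w + ?a * cnj (B x w)) + ?a * cnj ?a * B w w"
      by (simp add: add_left add_right scale_left scale_right hermitian[of w x] algebra_simps)
    also have "\<dots> = B x x - of_real (2 * t * s) + of_real (t\<^sup>2 * s) * B w w"
      using norm_sq by (simp add: power2_eq_square)
    finally show "0 \<le> Re (B x x) - 2 * t * s + t\<^sup>2 * (s * Re (B w w))"
      using nonneg[of "x + smul (- ?a) w"] by simp
  qed (simp add: s_def nonneg)
  then have "s \<le> Re (B x x) * Re (B w w)"
    by (rule le_mult_of_square_le) (simp_all add: s_def nonneg)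
  then show ?thesis by (simp add: s_def)
qed

theorem Bombieri:
  assumes "finite I" "I \<noteq> {}"
  shows "(\<Sum>i\<in>I. (cmod (B x (y i)))\<^sup>2)
           \<le> Re (B x x) * (Max ((\<lambda>i. Re (B (y i) (y i))) ` I)
                             + sqrt (\<Sum>(i, j)\<in>off_diag I. (cmod (B (y i) (y j)))\<^sup>2))"
    (is "?S \<le> Re (B x x) * (?M + sqrt ?T)")
proof -
  define w where "w = (\<Sum>i\<in>I. smul (B x (y i)) (y i))"
  have "B x w = (\<Sum>i\<in>I. B x (y i) * cnj (B x (y i)))"
    by (simp add: w_def sum_right scale_right mult.commute)
  also have "\<dots> = of_real ?S"
    by (simp add: complex_norm_square del: of_real_power)
  finally have "cmod (B x w) = ?S"
    by (simp only: norm_of_real abs_of_nonneg sum_nonneg zero_le_power2)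
  then have CS: "?S\<^sup>2 \<le> Re (B x x) * Re (B w w)"
    using Cauchy_Schwarz[of x w] by simp
  have Bww: "Re (B w w) \<le> ?S * (?M + sqrt ?T)"
    unfolding w_def sesquilinear_sum_sum
    using \<open>finite I\<close> by (intro hermitian_form_le_diag_offdiag) auto
  have "0 \<le> ?M"
    using assms by (auto simp: Max_ge_iff nonneg)
  then have "0 \<le> ?M + sqrt ?T"
    by (simp add: sum_nonneg case_prod_unfold)
  moreover have "0 \<le> ?S"
    by (simp add: sum_nonneg)
  ultimately show ?thesis
    using le_mult_of_square_le[OF CS Bww] nonneg[of x] by simp
qed

end

lemma real_2ip_semi_inner:
  assumes "real_2ip smul ip"
  shows "real_semi_inner smul (\<lambda>u v. ip u v z)"
  using assms unfolding real_2ip_def two_ip_axioms_def real_semi_inner_def by blast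

lemma complex_2ip_semi_inner:
  assumes "complex_2ip smul ip"
  shows "complex_semi_inner smul (\<lambda>u v. ip u v z)"
  using assms unfolding complex_2ip_def two_ip_axioms_def complex_semi_inner_def by blast

lemma real_2ip_Bombieri:
  assumes "real_2ip smul ip" "finite I" "I \<noteq> {}"
  shows "(\<Sum>i\<in>I. \<bar>ip x (y i) z\<bar>\<^sup>2)
           \<le> (r2norm ip x z)\<^sup>2 * (Max ((\<lambda>i. (r2norm ip (y i) z)\<^sup>2) ` I)
                                 + sqrt (\<Sum>(i, j)\<in>off_diag I. \<bar>ip (y i) (y j) z\<bar>\<^sup>2))"
proof -
  interpret real_semi_inner smul "\<lambda>u v. ip u v z"
    using assms(1) by (rule real_2ip_semi_inner)
  have norm_sq: "(r2norm ip u z)\<^sup>2 = ip u u z" for u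
    by (simp add: r2norm_def nonneg)
  show ?thesis
    unfolding norm_sq power2_abs by (rule Bombieri[OF assms(2,3)])
qed

lemma complex_2ip_Bombieri:
  assumes "complex_2ip smul ip" "finite I" "I \<noteq> {}"
  shows "(\<Sum>i\<in>I. (cmod (ip x (y i) z))\<^sup>2)
           \<le> (c2norm ip x z)\<^sup>2 * (Max ((\<lambda>i. (c2norm ip (y i) z)\<^sup>2) ` I)
                                 + sqrt (\<Sum>(i, j)\<in>off_diag I. (cmod (ip (y i) (y j) z))\<^sup>2))"
proof -
  interpret complex_semi_inner smul "\<lambda>u v. ip u v z"
    using assms(1) by (rule complex_2ip_semi_inner)
  have norm_sq: "(c2norm ip u z)\<^sup>2 = Re (ip u u z)" for u
    by (simp add: c2norm_def nonneg)
  show ?thesis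
    unfolding norm_sq by (rule Bombieri[OF assms(2,3)])
qed

theorem mainTheorem1:
  shows "(\<forall>(smul :: real \<Rightarrow> 'a::ab_group_add \<Rightarrow> 'a) ip (n::nat) x y z.
            real_2ip smul ip \<and> 0 < n \<longrightarrow>
            (\<Sum>i=1..n. \<bar>ip x (y i) z\<bar>^2)
              \<le> (r2norm ip x z)^2 *
                 (Max ((\<lambda>i. (r2norm ip (y i) z)^2) ` {1..n})
                  + sqrt (\<Sum>(i,j)\<in>{(i,j). i \<in> {1..n} \<and> j \<in> {1..n} \<and> i \<noteq> j}.
                            \<bar>ip (y i) (y j) z\<bar>^2)))
       \<and> (\<forall>(smul :: complex \<Rightarrow> 'b::ab_group_add \<Rightarrow> 'b) ip (n::nat) x y z.
            complex_2ip smul ip \<and> 0 < n \<longrightarrow>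
            (\<Sum>i=1..n. (cmod (ip x (y i) z))^2)
              \<le> (c2norm ip x z)^2 *
                 (Max ((\<lambda>i. (c2norm ip (y i) z)^2) ` {1..n})
                  + sqrt (\<Sum>(i,j)\<in>{(i,j). i \<in> {1..n} \<and> j \<in> {1..n} \<and> i \<noteq> j}.
                            (cmod (ip (y i) (y j) z))^2)))"
  unfolding off_diag_def[symmetric]
  by (intro conjI allI impI; elim conjE; erule real_2ip_Bombieri complex_2ip_Bombieri) simp_all

end
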